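(* Let $d\ge 1$ and let $G$ be an undirected graph. (i) If $C$ is a clique of $G$ with at least $2d+1$ vertices, then $C$ is monochromatic. (ii) If $X$ and $Y$ are monochromatic sets with $X\cap Y\neq\emptyset$, then $X\cup Y$ is monochromatic. (iii) If a vertex $u$ has more than $d$ neighbors in a monochromatic set $X$, then $X\cup\{u\}$ is monochromatic. (iv) If $T\subseteq V(G)$ is such that more than $2d$ vertices of $V(G)\setminus T$ have neighborhoods containing $T$, then $T$ is monochromatic.
   Context: All graphs are finite, simple and undirected. A cut of $G$ is a partition $(A,B)$ of $V(G)$ into two nonempty sets. A cut $(A,B)$ is a $d$-cut if every vertex of $A$ has at most $d$ neighbors in $B$ and every vertex of $B$ has at most $d$ neighbors in $A$. A set $T\subseteq V(G)$ is monochromatic if for every $d$-cut $(A,B)$ of $G$, either $T\subseteq A$ or $T\subseteq B$. *)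

theory Defs
  imports Main
begin

definition simple_graph :: "'a set \<Rightarrow> ('a \<Rightarrow> 'a \<Rightarrow> bool) \<Rightarrow> bool" where
  "simple_graph V E \<longleftrightarrow> finite V \<and> (\<forall>u v. E u v \<longrightarrow> u \<in> V \<and> v \<in> V)
     \<and> (\<forall>u v. E u v \<longrightarrow> E v u) \<and> (\<forall>v. \<not> E v v)"

definition nbrs_in :: "('a \<Rightarrow> 'a \<Rightarrow> bool) \<Rightarrow> 'a \<Rightarrow> 'a set \<Rightarrow> nat" where
  "nbrs_in E v S = card {w \<in> S. E v w}"

definition is_cut :: "'a set \<Rightarrow> 'a set \<Rightarrow> 'a set \<Rightarrow> bool" where
  "is_cut V A B \<longleftrightarrow> A \<noteq> {} \<and> B \<noteq> {} \<and> A \<inter> B = {} \<and> A \<union> B = V"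

definition d_cut :: "'a set \<Rightarrow> ('a \<Rightarrow> 'a \<Rightarrow> bool) \<Rightarrow> nat \<Rightarrow> 'a set \<Rightarrow> 'a set \<Rightarrow> bool" where
  "d_cut V E d A B \<longleftrightarrow> is_cut V A B
     \<and> (\<forall>v\<in>A. nbrs_in E v B \<le> d) \<and> (\<forall>v\<in>B. nbrs_in E v A \<le> d)"

definition monochromatic :: "'a set \<Rightarrow> ('a \<Rightarrow> 'a \<Rightarrow> bool) \<Rightarrow> nat \<Rightarrow> 'a set \<Rightarrow> bool" where
  "monochromatic V E d T \<longleftrightarrow> T \<subseteq> V \<and>
     (\<forall>A B. d_cut V E d A B \<longrightarrow> T \<subseteq> A \<or> T \<subseteq> B)"

definition clique :: "'a set \<Rightarrow> ('a \<Rightarrow> 'a \<Rightarrow> bool) \<Rightarrow> 'a set \<Rightarrow> bool" where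
  "clique V E C \<longleftrightarrow> C \<subseteq> V \<and> (\<forall>u\<in>C. \<forall>v\<in>C. u \<noteq> v \<longrightarrow> E u v)"

end

theory Submission
  imports Defs
begin

(* If a d-cut (A, B) separates a \<in> A from b \<in> B, then b has at most d neighbours in A and a
   at most d in B, so a set whose members on either side are adjacent to the vertex on the other
   side has at most 2d elements.  A clique through a and b, and the common neighbours of a set
   containing a and b, are such sets.  Likewise a vertex with more than d neighbours in one side
   must lie on that side. *)

lemma d_cut_sym: "d_cut V E d A B \<Longrightarrow> d_cut V E d B A"
  unfolding d_cut_def is_cut_def by auto

lemma card_neighbours_across_d_cut_le:
  assumes "finite V" "d_cut V E d A B" "v \<in> A" "W \<subseteq> B" "\<forall>w\<in>W. E v w"
  shows "card W \<le> d"
proof -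
  have "finite B"
    using assms(1,2) unfolding d_cut_def is_cut_def by (metis finite_Un)
  then have "card W \<le> card {w \<in> B. E v w}"
    using assms(4,5) by (intro card_mono) auto
  also have "\<dots> \<le> d"
    using assms(2,3) unfolding d_cut_def nbrs_in_def by auto
  finally show ?thesis .
qed

lemma card_linked_across_d_cut_le:
  assumes "finite V" "d_cut V E d A B" "a \<in> A" "b \<in> B" "S \<subseteq> V"
    and "\<forall>x\<in>S \<inter> B. E a x" "\<forall>x\<in>S \<inter> A. E b x"
  shows "card S \<le> 2 * d"
proof -
  have "S = (S \<inter> A) \<union> (S \<inter> B)"
    using assms(2,5) unfolding d_cut_def is_cut_def by auto
  then have "card S \<le> card (S \<inter> A) + card (S \<inter> B)"
    by (metis card_Un_le)
  moreover have "card (S \<inter> B) \<le> d"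
    using card_neighbours_across_d_cut_le[OF assms(1,2,3)] assms(6) by blast
  moreover have "card (S \<inter> A) \<le> d"
    using card_neighbours_across_d_cut_le[OF assms(1) d_cut_sym[OF assms(2)] assms(4)] assms(7)
    by blast
  ultimately show ?thesis by linarith
qed

lemma monochromaticI:
  assumes "T \<subseteq> V"
    and "\<And>A B a b. d_cut V E d A B \<Longrightarrow> a \<in> T \<inter> A \<Longrightarrow> b \<in> T \<inter> B \<Longrightarrow> False"
  shows "monochromatic V E d T"
  unfolding monochromatic_def
proof (intro conjI allI impI)
  fix A B assume cut: "d_cut V E d A B"
  have "A \<union> B = V" using cut unfolding d_cut_def is_cut_def by auto
  then show "T \<subseteq> A \<or> T \<subseteq> B"
    using assms(1) assms(2)[OF cut] by blast
qed (fact assms(1))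

lemma monochromatic_clique:
  assumes "finite V" "clique V E C" "card C \<ge> 2 * d + 1"
  shows "monochromatic V E d C"
proof (rule monochromaticI)
  show CV: "C \<subseteq> V" using assms(2) unfolding clique_def by auto
  fix A B a b assume cut: "d_cut V E d A B" and a: "a \<in> C \<inter> A" and b: "b \<in> C \<inter> B"
  have "A \<inter> B = {}" using cut unfolding d_cut_def is_cut_def by auto
  then have "\<forall>x\<in>C \<inter> B. E a x" "\<forall>x\<in>C \<inter> A. E b x"
    using a b assms(2) unfolding clique_def by (metis IntE disjoint_iff)+
  with a b have "card C \<le> 2 * d"
    by (intro card_linked_across_d_cut_le[OF assms(1) cut _ _ CV]) auto
  then show False using assms(3) by simp
qed

lemma monochromatic_Un:
  assumes "monochromatic V E d X" "monochromatic V E d Y" "X \<inter> Y \<noteq> {}"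
  shows "monochromatic V E d (X \<union> Y)"
  unfolding monochromatic_def
proof (intro conjI allI impI)
  show "X \<union> Y \<subseteq> V" using assms(1,2) unfolding monochromatic_def by blast
  fix A B assume cut: "d_cut V E d A B"
  have "A \<inter> B = {}" using cut unfolding d_cut_def is_cut_def by auto
  moreover have "X \<subseteq> A \<or> X \<subseteq> B" "Y \<subseteq> A \<or> Y \<subseteq> B"
    using assms(1,2) cut unfolding monochromatic_def by auto
  ultimately show "X \<union> Y \<subseteq> A \<or> X \<union> Y \<subseteq> B" using assms(3) by blast
qed

lemma side_of_d_cut_if_many_neighbours:
  assumes "finite V" "d_cut V E d A B" "X \<subseteq> A" "u \<in> V" "nbrs_in E u X > d"
  shows "u \<in> A"
proof (rule ccontr)
  assume "u \<notin> A"
  with assms(2,4) have "u \<in> B" unfolding d_cut_def is_cut_def by auto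
  then have "card {w \<in> X. E u w} \<le> d"
    using assms(3) by (intro card_neighbours_across_d_cut_le[OF assms(1) d_cut_sym[OF assms(2)]]) auto
  then show False using assms(5) unfolding nbrs_in_def by simp
qed

lemma monochromatic_add_vertex:
  assumes "finite V" "monochromatic V E d X" "u \<in> V" "nbrs_in E u X > d"
  shows "monochromatic V E d (X \<union> {u})"
  unfolding monochromatic_def
proof (intro conjI allI impI)
  show "X \<union> {u} \<subseteq> V" using assms(2,3) unfolding monochromatic_def by blast
  fix A B assume cut: "d_cut V E d A B"
  have "X \<subseteq> A \<or> X \<subseteq> B" using assms(2) cut unfolding monochromatic_def by auto
  then show "X \<union> {u} \<subseteq> A \<or> X \<union> {u} \<subseteq> B"
    using side_of_d_cut_if_many_neighbours[OF assms(1) cut _ assms(3,4)]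
      side_of_d_cut_if_many_neighbours[OF assms(1) d_cut_sym[OF cut] _ assms(3,4)]
    by blast
qed

lemma monochromatic_if_many_common_neighbours:
  assumes "simple_graph V E" "T \<subseteq> V" "card {v \<in> V - T. \<forall>t\<in>T. E v t} > 2 * d"
  shows "monochromatic V E d T"
proof (rule monochromaticI[OF assms(2)])
  fix A B a b assume cut: "d_cut V E d A B" and "a \<in> T \<inter> A" "b \<in> T \<inter> B"
  moreover have "finite V" "\<And>x y. E x y \<Longrightarrow> E y x"
    using assms(1) unfolding simple_graph_def by auto
  ultimately have "card {v \<in> V - T. \<forall>t\<in>T. E v t} \<le> 2 * d"
    by (intro card_linked_across_d_cut_le[OF _ cut]) auto
  then show False using assms(3) by simp
qed

theorem lemma6:
  fixes V :: "'a set" and E :: "'a \<Rightarrow> 'a \<Rightarrow> bool" and d :: nat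
  assumes "d \<ge> 1" and "simple_graph V E"
  shows "(\<forall>C. clique V E C \<and> card C \<ge> 2 * d + 1 \<longrightarrow> monochromatic V E d C)
    \<and> (\<forall>X Y. monochromatic V E d X \<and> monochromatic V E d Y \<and> X \<inter> Y \<noteq> {}
            \<longrightarrow> monochromatic V E d (X \<union> Y))
    \<and> (\<forall>X u. monochromatic V E d X \<and> u \<in> V \<and> nbrs_in E u X > d
            \<longrightarrow> monochromatic V E d (X \<union> {u}))
    \<and> (\<forall>T. T \<subseteq> V \<and> card {v \<in> V - T. \<forall>t\<in>T. E v t} > 2 * d
            \<longrightarrow> monochromatic V E d T)"
proof -
  have fin: "finite V" using assms(2) unfolding simple_graph_def by simp
  show ?thesis
  proof (intro conjI allI impI; elim conjE)
    show "monochromatic V E d C" if "clique V E C" "card C \<ge> 2 * d + 1" for C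
      using monochromatic_clique[OF fin that] .
    show "monochromatic V E d (X \<union> Y)"
      if "monochromatic V E d X" "monochromatic V E d Y" "X \<inter> Y \<noteq> {}" for X Y
      using monochromatic_Un[OF that] .
    show "monochromatic V E d (X \<union> {u})"
      if "monochromatic V E d X" "u \<in> V" "nbrs_in E u X > d" for X u
      using monochromatic_add_vertex[OF fin that] .
    show "monochromatic V E d T"
      if "T \<subseteq> V" "card {v \<in> V - T. \<forall>t\<in>T. E v t} > 2 * d" for T
      using monochromatic_if_many_common_neighbours[OF assms(2) that] .
  qed
qed

end
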